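(* Let a class of $f$-fat geometric objects (for a constant $f$) be given. If there is an augmented range query structure (ARQS) with running time $\zeta(n)$ for this class of objects, then there is an $O(1)$-DISQS (specifically, a $(1/f)$-DISQS) with running time $O(\zeta(n))$ for these objects.
   Context: Objects are connected subsets of $\mathbb{R}^d$; the size of an object is the side length of a minimal enclosing axis-aligned hypercube; a collection is $f$-fat if for every axis-aligned hypercube $R$ of side length $r$ there are $f$ points such that every object intersecting $R$ with size at least $r$ contains one of them. An independent set is a set of pairwise disjoint objects; $\mathrm{OPT}(S)$ is the maximum size of an independent set of $S$. An ARQS with running time $\zeta(n)$ stores a set of objects of the class ($n$ = number stored) and supports, each in time $\zeta(n)$: Insert, Delete, Unmark-all (set all stored objects unmarked), Mark-intersecting$(x)$ (for an object $x$ of the class, mark all stored objects intersecting $x$), and Smallest-unmarked (report a smallest unmarked stored object). A $\beta$-DISQS with running time $f'(n)$ maintains a set $S$, $n=|S|$, supporting $\textsc{Update}(u)$ ($S\leftarrow S\oplus\{u\}$) in time $f'(n)$ and $\textsc{Query}$, which returns an independent subset of $S$ of size at least $\beta\,\mathrm{OPT}(S)$ in time $kf'(n)$ when it returns $k$ objects. *)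

theory Defs
  imports "HOL-Analysis.Analysis"
begin

type_synonym ('d) obj = "(real^'d) set"

definition cube :: "real^'d \<Rightarrow> real \<Rightarrow> ('d::finite) obj" where
  "cube a r = cbox a (\<chi> i. a $ i + r)"

definition osize :: "('d::finite) obj \<Rightarrow> real" where
  "osize X = Inf {r. 0 \<le> r \<and> (\<exists>a. X \<subseteq> cube a r)}"

definition fat :: "nat \<Rightarrow> ('d::finite) obj set \<Rightarrow> bool" where
  "fat f K \<longleftrightarrow>
     (\<forall>a r. 0 < r \<longrightarrow>
        (\<exists>P. finite P \<and> card P \<le> f \<and>
             (\<forall>X\<in>K. X \<inter> cube a r \<noteq> {} \<and> r \<le> osize X \<longrightarrow> X \<inter> P \<noteq> {})))"

definition independent :: "'a set set \<Rightarrow> bool" where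
  "independent I \<longleftrightarrow> (\<forall>X\<in>I. \<forall>Y\<in>I. X \<noteq> Y \<longrightarrow> X \<inter> Y = {})"

text \<open>Maximum size of an independent subset (S finite in all uses).\<close>
definition OPT :: "'a set set \<Rightarrow> nat" where
  "OPT S = Max (card ` {I. I \<subseteq> S \<and> independent I})"

text \<open>A program issues ARQS operations; after Smallest-unmarked it continues depending
  on the answer (None = no unmarked object). Ret returns the list of reported objects.\<close>
codatatype 'a prog =
    Ret "'a list"
  | PIns 'a "'a prog"
  | PDel 'a "'a prog"
  | PUnmark "'a prog"
  | PMark 'a "'a prog"
  | PSmall "'a option \<Rightarrow> 'a prog"

text \<open>Abstract ARQS state: (stored objects T, marked objects M).
  Valid answers of Smallest-unmarked (any smallest one, ties resolved arbitrarily).\<close>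
definition smallest_ok :: "('d::finite) obj set \<times> ('d::finite) obj set \<Rightarrow> ('d::finite) obj option \<Rightarrow> bool" where
  "smallest_ok \<sigma> r \<longleftrightarrow>
     (case \<sigma> of (T, M) \<Rightarrow>
        (case r of None \<Rightarrow> T - M = {}
         | Some y \<Rightarrow> y \<in> T - M \<and> (\<forall>z\<in>T - M. osize y \<le> osize z)))"

text \<open>run K \<zeta> p \<sigma> out \<sigma>' t: program p started on ARQS state \<sigma> terminates with output out,
  final state \<sigma>', and total cost t, each ARQS operation costing \<zeta>(n), n = number stored.\<close>
inductive run :: "('d::finite) obj set \<Rightarrow> (nat \<Rightarrow> real) \<Rightarrow> ('d::finite) obj prog \<Rightarrow> ('d::finite) obj set \<times> ('d::finite) obj set
                  \<Rightarrow> ('d::finite) obj list \<Rightarrow> ('d::finite) obj set \<times> ('d::finite) obj set \<Rightarrow> real \<Rightarrow> bool"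
  for K :: "('d::finite) obj set" and \<zeta> :: "nat \<Rightarrow> real" where
  run_ret: "run K \<zeta> (Ret xs) \<sigma> xs \<sigma> 0"
| run_ins: "x \<in> K \<Longrightarrow> x \<notin> T \<Longrightarrow> run K \<zeta> p (insert x T, M) out \<sigma>' t
            \<Longrightarrow> run K \<zeta> (PIns x p) (T, M) out \<sigma>' (\<zeta> (card T) + t)"
| run_del: "x \<in> T \<Longrightarrow> run K \<zeta> p (T - {x}, M - {x}) out \<sigma>' t
            \<Longrightarrow> run K \<zeta> (PDel x p) (T, M) out \<sigma>' (\<zeta> (card T) + t)"
| run_unmark: "run K \<zeta> p (T, {}) out \<sigma>' t
            \<Longrightarrow> run K \<zeta> (PUnmark p) (T, M) out \<sigma>' (\<zeta> (card T) + t)"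
| run_mark: "x \<in> K \<Longrightarrow> run K \<zeta> p (T, M \<union> {y\<in>T. y \<inter> x \<noteq> {}}) out \<sigma>' t
            \<Longrightarrow> run K \<zeta> (PMark x p) (T, M) out \<sigma>' (\<zeta> (card T) + t)"
| run_small: "smallest_ok (T, M) r \<Longrightarrow> run K \<zeta> (k r) (T, M) out \<sigma>' t
            \<Longrightarrow> run K \<zeta> (PSmall k) (T, M) out \<sigma>' (\<zeta> (card T) + t)"

text \<open>terminates K p \<sigma>: every execution of p from \<sigma> (for every admissible behaviour
  of the ARQS) is finite and never performs an invalid operation.\<close>
inductive terminates :: "('d::finite) obj set \<Rightarrow> ('d::finite) obj prog \<Rightarrow> ('d::finite) obj set \<times> ('d::finite) obj set \<Rightarrow> bool"
  for K :: "('d::finite) obj set" where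
  term_ret: "terminates K (Ret xs) \<sigma>"
| term_ins: "x \<in> K \<Longrightarrow> x \<notin> T \<Longrightarrow> terminates K p (insert x T, M)
            \<Longrightarrow> terminates K (PIns x p) (T, M)"
| term_del: "x \<in> T \<Longrightarrow> terminates K p (T - {x}, M - {x})
            \<Longrightarrow> terminates K (PDel x p) (T, M)"
| term_unmark: "terminates K p (T, {}) \<Longrightarrow> terminates K (PUnmark p) (T, M)"
| term_mark: "x \<in> K \<Longrightarrow> terminates K p (T, M \<union> {y\<in>T. y \<inter> x \<noteq> {}})
            \<Longrightarrow> terminates K (PMark x p) (T, M)"
| term_small: "(\<And>r. smallest_ok (T, M) r \<Longrightarrow> terminates K (k r) (T, M))
            \<Longrightarrow> terminates K (PSmall k) (T, M)"

datatype 'a dop = Upd 'a | Qry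

text \<open>Histories are stored newest operation first. S_of h is the maintained set S.\<close>
fun S_of :: "'a dop list \<Rightarrow> 'a set" where
  "S_of [] = {}"
| "S_of (Upd u # h) = (if u \<in> S_of h then S_of h - {u} else insert u (S_of h))"
| "S_of (Qry # h) = S_of h"

text \<open>Reachable ARQS states of the DISQS given by programs upd (receiving whether u \<in> S)
  and qry, starting from the empty structure.\<close>
inductive reach :: "('d::finite) obj set \<Rightarrow> (nat \<Rightarrow> real) \<Rightarrow> (bool \<Rightarrow> ('d::finite) obj \<Rightarrow> ('d::finite) obj prog)
                    \<Rightarrow> ('d::finite) obj prog \<Rightarrow> ('d::finite) obj dop list \<Rightarrow> ('d::finite) obj set \<times> ('d::finite) obj set \<Rightarrow> bool"
  for K \<zeta> upd qry where
  reach_init: "reach K \<zeta> upd qry [] ({}, {})"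
| reach_upd: "reach K \<zeta> upd qry h \<sigma> \<Longrightarrow> u \<in> K \<Longrightarrow> run K \<zeta> (upd (u \<in> S_of h) u) \<sigma> out \<sigma>' t
              \<Longrightarrow> reach K \<zeta> upd qry (Upd u # h) \<sigma>'"
| reach_qry: "reach K \<zeta> upd qry h \<sigma> \<Longrightarrow> run K \<zeta> qry \<sigma> out \<sigma>' t
              \<Longrightarrow> reach K \<zeta> upd qry (Qry # h) \<sigma>'"

end

theory Submission
  imports Defs
begin

text \<open>The query runs the greedy algorithm on the ARQS: unmark everything, then repeatedly
  report the smallest unmarked object y and mark every stored object meeting y. The reported
  objects are pairwise disjoint, and every stored object X meets a reported object y with
  size y \<le> size X, namely the one that marked it (X was still unmarked when y was chosen).
  Fatness, applied to a minimal enclosing cube of y, gives f points stabbing all objects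
  charged to y in this way, so an independent set has at most f members charged to each y,
  and OPT \<le> f k for k reported objects. Each round costs two ARQS operations, so a query
  costs (2k + 2) \<zeta>(n), while an update is a single insertion or deletion.\<close>

lemma mem_cube: "x \<in> cube a r \<longleftrightarrow> (\<forall>i. a $ i \<le> x $ i \<and> x $ i \<le> a $ i + r)"
  by (simp add: cube_def mem_box_cart)

lemma subset_cube_componentwise_Inf:
  fixes X :: "(real^'d::finite) set"
  assumes "X \<noteq> {}" and "X \<subseteq> cube c r"
  shows "X \<subseteq> cube (\<chi> i. Inf ((\<lambda>x. x $ i) ` X)) r"
proof
  fix x assume x: "x \<in> X"
  show "x \<in> cube (\<chi> i. Inf ((\<lambda>x. x $ i) ` X)) r"
    unfolding mem_cube
  proof
    fix i
    have "bdd_below ((\<lambda>x. x $ i) ` X)"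
      using assms(2) by (auto simp: mem_cube intro!: bdd_belowI[of _ "c $ i"])
    then have "Inf ((\<lambda>x. x $ i) ` X) \<le> x $ i"
      using x by (auto intro: cInf_lower)
    moreover have "c $ i \<le> Inf ((\<lambda>x. x $ i) ` X)"
      using assms by (auto intro!: cInf_greatest simp: mem_cube)
    moreover have "x $ i \<le> c $ i + r"
      using assms(2) x by (auto simp: mem_cube)
    ultimately show "(\<chi> i. Inf ((\<lambda>x. x $ i) ` X)) $ i \<le> x $ i \<and>
        x $ i \<le> (\<chi> i. Inf ((\<lambda>x. x $ i) ` X)) $ i + r"
      by simp
  qed
qed

lemma osize_attained:
  fixes X :: "(real^'d::finite) set"
  assumes "X \<noteq> {}" and "bounded X"
  shows "0 \<le> osize X \<and> (\<exists>a. X \<subseteq> cube a (osize X))"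
proof -
  define R where "R = {r. 0 \<le> r \<and> (\<exists>a. X \<subseteq> cube a r)}"
  define a :: "real^'d" where "a = (\<chi> i. Inf ((\<lambda>x. x $ i) ` X))"
  obtain B where B: "\<forall>x\<in>X. norm x \<le> B"
    using \<open>bounded X\<close> by (auto simp: bounded_iff)
  have "X \<subseteq> cube (\<chi> i. - B) (2 * B)"
  proof
    fix x assume "x \<in> X"
    then have "\<bar>x $ i\<bar> \<le> B" for i
      using B component_le_norm_cart order_trans by blast
    then show "x \<in> cube (\<chi> i. - B) (2 * B)"
      by (simp add: mem_cube abs_le_iff minus_le_iff)
  qed
  moreover have "0 \<le> B"
    using B \<open>X \<noteq> {}\<close> norm_ge_zero order_trans by blast
  ultimately have "2 * B \<in> R"
    unfolding R_def by auto
  then have "R \<noteq> {}"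
    by blast
  have corner: "X \<subseteq> cube a r" if "r \<in> R" for r
    using that subset_cube_componentwise_Inf[OF \<open>X \<noteq> {}\<close>] unfolding R_def a_def by blast
  have "osize X = Inf R"
    unfolding osize_def R_def ..
  moreover have "0 \<le> Inf R"
    using \<open>R \<noteq> {}\<close> by (auto intro: cInf_greatest simp: R_def)
  moreover have "X \<subseteq> cube a (Inf R)"
  proof
    fix x assume "x \<in> X"
    have "a $ i \<le> x $ i \<and> x $ i - a $ i \<le> r" if "r \<in> R" for r i
    proof -
      have "x \<in> cube a r"
        using corner[OF that] \<open>x \<in> X\<close> by blast
      then have "a $ i \<le> x $ i" "x $ i \<le> a $ i + r"
        by (auto simp: mem_cube)
      then show ?thesis
        by linarith
    qed
    then have "a $ i \<le> x $ i \<and> x $ i - a $ i \<le> Inf R" for i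
      using \<open>R \<noteq> {}\<close> by (auto intro: cInf_greatest)
    then show "x \<in> cube a (Inf R)"
      by (simp add: mem_cube) (metis add.commute diff_le_eq)
  qed
  ultimately show ?thesis
    by auto
qed

lemma fat_stabbing_points:
  fixes K :: "(real^'d::finite) set set"
  assumes "fat f K" and "1 \<le> f" and "y \<noteq> {}" and "bounded y"
  obtains P where "finite P" "card P \<le> f"
    "\<And>X. X \<in> K \<Longrightarrow> X \<inter> y \<noteq> {} \<Longrightarrow> osize y \<le> osize X \<Longrightarrow> X \<inter> P \<noteq> {}"
proof -
  obtain a where a: "y \<subseteq> cube a (osize y)" and "0 \<le> osize y"
    using osize_attained[OF \<open>y \<noteq> {}\<close> \<open>bounded y\<close>] by blast
  show ?thesis
  proof (cases "osize y = 0")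
    case True
    \<comment> \<open>fatness only concerns cubes of positive side; a point stabs itself\<close>
    moreover have "cube a 0 = {a}"
      unfolding cube_def by (simp add: vec_eq_iff)
    ultimately have "y \<subseteq> {a}"
      using a by simp
    then show ?thesis
      using \<open>1 \<le> f\<close> by (intro that[of "{a}"]) auto
  next
    case False
    then have "0 < osize y"
      using \<open>0 \<le> osize y\<close> by simp
    then obtain P where "finite P" "card P \<le> f"
      and P: "\<forall>X\<in>K. X \<inter> cube a (osize y) \<noteq> {} \<and> osize y \<le> osize X \<longrightarrow> X \<inter> P \<noteq> {}"
      using \<open>fat f K\<close>[unfolded fat_def, rule_format, where a=a and r="osize y"] by blast
    show ?thesis
    proof (rule that[OF \<open>finite P\<close> \<open>card P \<le> f\<close>])
      fix X assume "X \<in> K" "X \<inter> y \<noteq> {}" "osize y \<le> osize X"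
      moreover have "X \<inter> cube a (osize y) \<noteq> {}"
        using \<open>X \<inter> y \<noteq> {}\<close> a by blast
      ultimately show "X \<inter> P \<noteq> {}"
        using P by blast
    qed
  qed
qed

lemma card_independent_le_stabbing:
  assumes "independent I" and "finite P" and "\<And>X. X \<in> I \<Longrightarrow> X \<inter> P \<noteq> {}"
  shows "card I \<le> card P"
proof -
  define pt where "pt X = (SOME p. p \<in> X \<inter> P)" for X
  have pt: "pt X \<in> X \<inter> P" if "X \<in> I" for X
  proof -
    have "\<exists>p. p \<in> X \<inter> P"
      using assms(3)[OF that] by blast
    then show ?thesis
      unfolding pt_def by (rule someI_ex)
  qed
  have "inj_on pt I"
  proof (rule inj_onI)
    fix X X' assume "X \<in> I" "X' \<in> I" "pt X = pt X'"
    then have "pt X \<in> X \<inter> X'"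
      using pt[OF \<open>X \<in> I\<close>] pt[OF \<open>X' \<in> I\<close>] by simp
    then show "X = X'"
      using \<open>independent I\<close> \<open>X \<in> I\<close> \<open>X' \<in> I\<close> unfolding independent_def by blast
  qed
  moreover have "pt ` I \<subseteq> P"
    using pt by auto
  ultimately show ?thesis
    using \<open>finite P\<close> by (rule card_inj_on_le)
qed

lemma card_independent_le_charging:
  fixes charged :: "'b \<Rightarrow> 'a set \<Rightarrow> bool"
  assumes "independent I" and "finite A"
    and "\<And>X. X \<in> I \<Longrightarrow> \<exists>y\<in>A. charged y X"
    and "\<And>y. y \<in> A \<Longrightarrow> \<exists>P. finite P \<and> card P \<le> f \<and> (\<forall>X\<in>I. charged y X \<longrightarrow> X \<inter> P \<noteq> {})"
  shows "card I \<le> f * card A"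
proof -
  define J where "J y = {X\<in>I. charged y X}" for y
  have "card (J y) \<le> f" if "y \<in> A" for y
  proof -
    obtain P where "finite P" "card P \<le> f" "\<forall>X\<in>I. charged y X \<longrightarrow> X \<inter> P \<noteq> {}"
      using assms(4) \<open>y \<in> A\<close> by blast
    moreover have "independent (J y)"
      using \<open>independent I\<close> unfolding independent_def J_def by blast
    ultimately show ?thesis
      using card_independent_le_stabbing[of "J y" P] unfolding J_def by auto
  qed
  have "I = (\<Union>y\<in>A. J y)"
    using assms(3) unfolding J_def by blast
  then have "card I \<le> (\<Sum>y\<in>A. card (J y))"
    using card_UN_le[OF \<open>finite A\<close>] by simp
  also have "\<dots> \<le> (\<Sum>y\<in>A. f)"
    using \<open>\<And>y. y \<in> A \<Longrightarrow> card (J y) \<le> f\<close> by (rule sum_mono)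
  finally show ?thesis
    by (simp add: mult.commute)
qed

lemma OPT_attained:
  assumes "finite T"
  obtains I where "I \<subseteq> T" "independent I" "OPT T = card I"
proof -
  have "finite (card ` {I. I \<subseteq> T \<and> independent I})"
    using assms by simp
  moreover have "{} \<in> {I. I \<subseteq> T \<and> independent I}"
    by (simp add: independent_def)
  ultimately have "OPT T \<in> card ` {I. I \<subseteq> T \<and> independent I}"
    unfolding OPT_def by (intro Max_in) auto
  then show ?thesis
    using that by blast
qed

lemma OPT_le_fat_charging:
  fixes K :: "(real^'d::finite) set set"
  assumes "fat f K" and "1 \<le> f" and objects: "\<forall>X\<in>K. X \<noteq> {} \<and> bounded X"
    and "finite T" and "T \<subseteq> K" and "finite A" and "A \<subseteq> K"
    and charging: "\<And>X. X \<in> T \<Longrightarrow> \<exists>y\<in>A. X \<inter> y \<noteq> {} \<and> osize y \<le> osize X"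
  shows "OPT T \<le> f * card A"
proof -
  obtain I where "I \<subseteq> T" "independent I" "OPT T = card I"
    using OPT_attained[OF \<open>finite T\<close>] .
  moreover have "card I \<le> f * card A"
  proof (rule card_independent_le_charging[where charged = "\<lambda>y X. X \<inter> y \<noteq> {} \<and> osize y \<le> osize X"])
    fix y assume "y \<in> A"
    then have "y \<noteq> {}" "bounded y"
      using \<open>A \<subseteq> K\<close> objects by auto
    then obtain P where "finite P" "card P \<le> f"
      "\<And>X. X \<in> K \<Longrightarrow> X \<inter> y \<noteq> {} \<Longrightarrow> osize y \<le> osize X \<Longrightarrow> X \<inter> P \<noteq> {}"
      using fat_stabbing_points[OF \<open>fat f K\<close> \<open>1 \<le> f\<close>] by blast
    then show "\<exists>P. finite P \<and> card P \<le> f \<and>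
        (\<forall>X\<in>I. X \<inter> y \<noteq> {} \<and> osize y \<le> osize X \<longrightarrow> X \<inter> P \<noteq> {})"
      using \<open>I \<subseteq> T\<close> \<open>T \<subseteq> K\<close> by blast
  qed (use \<open>independent I\<close> \<open>finite A\<close> \<open>I \<subseteq> T\<close> charging in auto)
  ultimately show ?thesis
    by simp
qed

text \<open>The argument pending holds the object just reported by Smallest-unmarked and not yet
  marked: primitive corecursion admits only one constructor in front of a corecursive call.\<close>

primcorec greedy :: "'a option \<Rightarrow> 'a list \<Rightarrow> 'a prog" where
  "greedy pending acc = (case pending of
     None \<Rightarrow> PSmall (\<lambda>r. case r of None \<Rightarrow> Ret acc | Some y \<Rightarrow> greedy (Some y) acc)
   | Some y \<Rightarrow> PMark y (greedy None (y # acc)))"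

lemma greedy_None:
  "greedy None acc = PSmall (\<lambda>r. case r of None \<Rightarrow> Ret acc | Some y \<Rightarrow> greedy (Some y) acc)"
  by (subst greedy.code) simp

lemma greedy_Some: "greedy (Some y) acc = PMark y (greedy None (y # acc))"
  by (subst greedy.code) simp

definition greedy_inv :: "('d::finite) obj set \<Rightarrow> 'd obj list \<Rightarrow> 'd obj set \<Rightarrow> bool" where
  "greedy_inv T acc M \<longleftrightarrow> set acc \<subseteq> T \<and> distinct acc \<and> independent (set acc) \<and>
     M = {X\<in>T. \<exists>y\<in>set acc. X \<inter> y \<noteq> {}} \<and>
     (\<forall>X\<in>M. \<exists>y\<in>set acc. X \<inter> y \<noteq> {} \<and> osize y \<le> osize X)"

lemma greedy_inv_Nil: "greedy_inv T [] {}"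
  by (simp add: greedy_inv_def independent_def)

lemma greedy_inv_step:
  assumes "greedy_inv T acc M" and "smallest_ok (T, M) (Some y)" and "\<forall>X\<in>T. X \<noteq> {}"
  shows "greedy_inv T (y # acc) (M \<union> {X\<in>T. X \<inter> y \<noteq> {}})"
proof -
  have "y \<in> T - M" and smallest: "\<forall>X\<in>T - M. osize y \<le> osize X"
    using assms(2) by (auto simp: smallest_ok_def)
  then have disjoint: "y \<inter> z = {}" if "z \<in> set acc" for z
    using assms(1) that unfolding greedy_inv_def by blast
  then have "y \<notin> set acc"
    using \<open>y \<in> T - M\<close> assms(3) by fastforce
  moreover have "independent (set (y # acc))"
    using assms(1) disjoint unfolding greedy_inv_def independent_def by (auto simp: Int_commute)
  moreover have "\<exists>z\<in>set (y # acc). X \<inter> z \<noteq> {} \<and> osize z \<le> osize X"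
    if "X \<in> M \<union> {X\<in>T. X \<inter> y \<noteq> {}}" for X
    using that assms(1) smallest unfolding greedy_inv_def by (cases "X \<in> M") auto
  ultimately show ?thesis
    using assms(1) \<open>y \<in> T - M\<close> unfolding greedy_inv_def by auto
qed

lemma card_unmarked_decreasing:
  assumes "finite T" and "\<forall>X\<in>T. X \<noteq> {}" and "y \<in> T - M"
  shows "card (T - (M \<union> {X\<in>T. X \<inter> y \<noteq> {}})) < card (T - M)"
proof (rule psubset_card_mono)
  show "T - (M \<union> {X\<in>T. X \<inter> y \<noteq> {}}) \<subset> T - M"
    using assms(2,3) by auto
qed (use assms(1) in simp)

lemma terminates_greedy:
  assumes "finite T" and "T \<subseteq> K" and "\<forall>X\<in>T. X \<noteq> {}"
  shows "terminates K (greedy None acc) (T, M)"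
proof (induction "card (T - M)" arbitrary: M acc rule: less_induct)
  case less
  show ?case
    unfolding greedy_None
  proof (rule term_small)
    fix r assume "smallest_ok (T, M) r"
    show "terminates K (case r of None \<Rightarrow> Ret acc | Some y \<Rightarrow> greedy (Some y) acc) (T, M)"
    proof (cases r)
      case None
      then show ?thesis
        by (simp add: term_ret)
    next
      case (Some y)
      then have "y \<in> T - M"
        using \<open>smallest_ok (T, M) r\<close> by (simp add: smallest_ok_def)
      then have "terminates K (greedy None (y # acc)) (T, M \<union> {X\<in>T. X \<inter> y \<noteq> {}})"
        using less card_unmarked_decreasing[OF assms(1,3)] by blast
      then show ?thesis
        using Some \<open>y \<in> T - M\<close> \<open>T \<subseteq> K\<close> by (auto simp: greedy_Some intro: term_mark)
    qed
  qed
qed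

lemma run_greedy_cases:
  assumes "run K \<zeta> (greedy None acc) (T, M) out \<sigma>' t"
  obtains "T - M = {}" "out = acc" "\<sigma>' = (T, M)" "t = \<zeta> (card T)"
  | y t' where "smallest_ok (T, M) (Some y)"
    "run K \<zeta> (greedy None (y # acc)) (T, M \<union> {X\<in>T. X \<inter> y \<noteq> {}}) out \<sigma>' t'"
    "t = 2 * \<zeta> (card T) + t'"
proof -
  obtain r t1 where small: "smallest_ok (T, M) r" and t: "t = \<zeta> (card T) + t1"
    and run: "run K \<zeta> (case r of None \<Rightarrow> Ret acc | Some y \<Rightarrow> greedy (Some y) acc) (T, M) out \<sigma>' t1"
    using assms unfolding greedy_None by (auto elim: run.cases)
  show ?thesis
  proof (cases r)
    case None
    then show ?thesis
      using small t run that(1) by (auto simp: smallest_ok_def elim: run.cases)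
  next
    case (Some y)
    then obtain t' where "run K \<zeta> (greedy None (y # acc)) (T, M \<union> {X\<in>T. X \<inter> y \<noteq> {}}) out \<sigma>' t'"
      and "t1 = \<zeta> (card T) + t'"
      using run by (auto simp: greedy_Some elim: run.cases)
    then show ?thesis
      using small t Some that(2) by auto
  qed
qed

lemma run_greedy:
  assumes "finite T" and "\<forall>X\<in>T. X \<noteq> {}"
    and "greedy_inv T acc M" and "run K \<zeta> (greedy None acc) (T, M) out \<sigma>' t"
  shows "\<exists>M' ys. \<sigma>' = (T, M') \<and> T - M' = {} \<and> greedy_inv T out M' \<and>
    out = ys @ acc \<and> t = (2 * real (length ys) + 1) * \<zeta> (card T)"
  using assms(3,4)
proof (induction "card (T - M)" arbitrary: M acc t rule: less_induct)
  case less
  from less.prems(2) show ?case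
  proof (cases rule: run_greedy_cases)
    case 1
    then show ?thesis
      using less.prems(1) by force
  next
    case (2 y t')
    then have "y \<in> T - M"
      by (simp add: smallest_ok_def)
    moreover have "greedy_inv T (y # acc) (M \<union> {X\<in>T. X \<inter> y \<noteq> {}})"
      using greedy_inv_step less.prems(1) 2(1) assms(2) .
    ultimately obtain M' ys where "\<sigma>' = (T, M')" "T - M' = {}" "greedy_inv T out M'"
      "out = ys @ y # acc" "t' = (2 * real (length ys) + 1) * \<zeta> (card T)"
      using less.hyps[OF card_unmarked_decreasing[OF assms(1,2)]] 2(2) by blast
    then show ?thesis
      using 2(3) by (intro exI[of _ M'] exI[of _ "ys @ [y]"]) (simp add: algebra_simps)
  qed
qed

definition disqs_update :: "bool \<Rightarrow> 'a \<Rightarrow> 'a prog" where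
  "disqs_update present u = (if present then PDel u (Ret []) else PIns u (Ret []))"

definition disqs_query :: "'a prog" where
  "disqs_query = PUnmark (greedy None [])"

lemma terminates_disqs_update:
  "u \<in> K \<Longrightarrow> terminates K (disqs_update (u \<in> T) u) (T, M)"
  by (auto simp: disqs_update_def intro: term_del term_ins term_ret)

lemma run_RetD: "run K \<zeta> (Ret xs) \<sigma> out \<sigma>' t \<Longrightarrow> out = xs \<and> \<sigma>' = \<sigma> \<and> t = 0"
  by (cases rule: run.cases) auto

lemma run_disqs_update:
  assumes "run K \<zeta> (disqs_update (u \<in> T) u) (T, M) out \<sigma>' t"
  shows "fst \<sigma>' = (if u \<in> T then T - {u} else insert u T) \<and> t = \<zeta> (card T)"
proof (cases "u \<in> T")
  case True
  with assms obtain t' where "run K \<zeta> (Ret []) (T - {u}, M - {u}) out \<sigma>' t'" "t = \<zeta> (card T) + t'"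
    by (auto simp: disqs_update_def elim: run.cases)
  then show ?thesis
    using True by (auto dest: run_RetD)
next
  case False
  with assms obtain t' where "run K \<zeta> (Ret []) (insert u T, M) out \<sigma>' t'" "t = \<zeta> (card T) + t'"
    by (auto simp: disqs_update_def elim: run.cases)
  then show ?thesis
    using False by (auto dest: run_RetD)
qed

lemma terminates_disqs_query:
  "finite T \<Longrightarrow> T \<subseteq> K \<Longrightarrow> \<forall>X\<in>T. X \<noteq> {} \<Longrightarrow> terminates K disqs_query (T, M)"
  unfolding disqs_query_def by (intro term_unmark terminates_greedy)

lemma run_disqs_query:
  assumes "finite T" and "\<forall>X\<in>T. X \<noteq> {}" and "run K \<zeta> disqs_query (T, M) out \<sigma>' t"
  shows "fst \<sigma>' = T \<and> set out \<subseteq> T \<and> distinct out \<and> independent (set out) \<and>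
    (\<forall>X\<in>T. \<exists>y\<in>set out. X \<inter> y \<noteq> {} \<and> osize y \<le> osize X) \<and>
    t = (2 * real (length out) + 2) * \<zeta> (card T)"
proof -
  obtain t' where run: "run K \<zeta> (greedy None []) (T, {}) out \<sigma>' t'" and t: "t = \<zeta> (card T) + t'"
    using assms(3) unfolding disqs_query_def by (cases rule: run.cases) auto
  obtain M' ys where \<sigma>': "\<sigma>' = (T, M')" and "T - M' = {}" and inv: "greedy_inv T out M'"
    and "out = ys @ []" and t': "t' = (2 * real (length ys) + 1) * \<zeta> (card T)"
    using run_greedy[OF assms(1,2) greedy_inv_Nil run] by auto
  have "\<forall>X\<in>M'. \<exists>y\<in>set out. X \<inter> y \<noteq> {} \<and> osize y \<le> osize X"
    using inv unfolding greedy_inv_def by (elim conjE)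
  then have "\<forall>X\<in>T. \<exists>y\<in>set out. X \<inter> y \<noteq> {} \<and> osize y \<le> osize X"
    using \<open>T - M' = {}\<close> by blast
  moreover have "set out \<subseteq> T" "distinct out" "independent (set out)"
    using inv by (simp_all add: greedy_inv_def)
  moreover have "t = (2 * real (length out) + 2) * \<zeta> (card T)"
    using t t' \<open>out = ys @ []\<close> by (simp add: algebra_simps)
  ultimately show ?thesis
    using \<sigma>' by simp
qed

lemma disqs_query_correct:
  fixes K :: "(real^'d::finite) set set"
  assumes "fat f K" and objects: "\<forall>X\<in>K. X \<noteq> {} \<and> bounded X"
    and "finite T" and "T \<subseteq> K" and "0 \<le> \<zeta> (card T)"
    and "run K \<zeta> disqs_query (T, M) out \<sigma>' t"
  shows "set out \<subseteq> T \<and> distinct out \<and> independent (set out) \<and>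
    (1 / real f) * real (OPT T) \<le> real (length out) \<and>
    t \<le> 4 * real (max 1 (length out)) * \<zeta> (card T)"
proof -
  have "\<forall>X\<in>T. X \<noteq> {}"
    using objects \<open>T \<subseteq> K\<close> by blast
  then have "set out \<subseteq> T" "distinct out" "independent (set out)"
    and charged: "\<forall>X\<in>T. \<exists>y\<in>set out. X \<inter> y \<noteq> {} \<and> osize y \<le> osize X"
    and t: "t = (2 * real (length out) + 2) * \<zeta> (card T)"
    using run_disqs_query[OF \<open>finite T\<close> _ assms(6)] by auto
  have "(1 / real f) * real (OPT T) \<le> real (length out)"
  proof (cases "f = 0")
    case False
    then have "OPT T \<le> f * card (set out)"
      using OPT_le_fat_charging[OF \<open>fat f K\<close> _ objects \<open>finite T\<close> \<open>T \<subseteq> K\<close>] charged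
        \<open>set out \<subseteq> T\<close> \<open>T \<subseteq> K\<close> by auto
    then show ?thesis
      using False \<open>distinct out\<close> by (simp add: distinct_card field_simps flip: of_nat_mult)
  qed simp
  moreover have "t \<le> 4 * real (max 1 (length out)) * \<zeta> (card T)"
    unfolding t using \<open>0 \<le> \<zeta> (card T)\<close> by (intro mult_right_mono) auto
  ultimately show ?thesis
    using \<open>set out \<subseteq> T\<close> \<open>distinct out\<close> \<open>independent (set out)\<close> by blast
qed

lemma finite_S_of: "finite (S_of h)"
  by (induction h rule: S_of.induct) auto

lemma reach_disqs_stored:
  assumes "reach K \<zeta> disqs_update disqs_query h \<sigma>" and "\<forall>X\<in>K. X \<noteq> {}"
  shows "fst \<sigma> = S_of h \<and> S_of h \<subseteq> K"
  using assms(1)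
proof induction
  case (reach_upd h \<sigma> u out \<sigma>' t)
  obtain M where "\<sigma> = (S_of h, M)" and "S_of h \<subseteq> K"
    using reach_upd.IH by (metis prod.collapse)
  then have "run K \<zeta> (disqs_update (u \<in> S_of h) u) (S_of h, M) out \<sigma>' t"
    using reach_upd.hyps(3) by simp
  then have "fst \<sigma>' = S_of (Upd u # h)"
    by (simp add: run_disqs_update)
  then show ?case
    using \<open>S_of h \<subseteq> K\<close> \<open>u \<in> K\<close> by auto
next
  case (reach_qry h \<sigma> out \<sigma>' t)
  obtain M where "\<sigma> = (S_of h, M)" and "S_of h \<subseteq> K"
    using reach_qry.IH by (metis prod.collapse)
  then have "run K \<zeta> disqs_query (S_of h, M) out \<sigma>' t"
    using reach_qry.hyps(2) by simp
  moreover have "\<forall>X\<in>S_of h. X \<noteq> {}"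
    using \<open>S_of h \<subseteq> K\<close> assms(2) by blast
  ultimately have "fst \<sigma>' = S_of h"
    by (simp add: run_disqs_query[OF finite_S_of])
  then show ?case
    using \<open>S_of h \<subseteq> K\<close> by simp
qed simp

theorem lemma7:
  fixes K :: "(real^'d) set set" and f :: nat and \<zeta> :: "nat \<Rightarrow> real"
  assumes objects: "\<forall>X\<in>K. X \<noteq> {} \<and> connected X \<and> bounded X"
    and fat: "fat f K"
    and zeta_nonneg: "\<forall>n. 0 \<le> \<zeta> n"
  shows "\<exists>upd qry (c::real). \<forall>h \<sigma>. reach K \<zeta> upd qry h \<sigma> \<longrightarrow>
           (\<forall>u\<in>K. terminates K (upd (u \<in> S_of h) u) \<sigma> \<and>
              (\<forall>out \<sigma>' t. run K \<zeta> (upd (u \<in> S_of h) u) \<sigma> out \<sigma>' t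
                   \<longrightarrow> t \<le> c * \<zeta> (card (S_of h)))) \<and>
           terminates K qry \<sigma> \<and>
           (\<forall>out \<sigma>' t. run K \<zeta> qry \<sigma> out \<sigma>' t \<longrightarrow>
              set out \<subseteq> S_of h \<and> distinct out \<and> independent (set out) \<and>
              (1 / real f) * real (OPT (S_of h)) \<le> real (length out) \<and>
              t \<le> c * real (max 1 (length out)) * \<zeta> (card (S_of h)))"
proof (intro exI[of _ disqs_update] exI[of _ disqs_query] exI[of _ "4::real"] allI impI)
  fix h \<sigma> assume "reach K \<zeta> disqs_update disqs_query h \<sigma>"
  then obtain M where \<sigma>: "\<sigma> = (S_of h, M)" and "S_of h \<subseteq> K"
    using reach_disqs_stored objects by (metis prod.collapse)
  have objects': "\<forall>X\<in>K. X \<noteq> {} \<and> bounded X"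
    using objects by blast
  then have "\<forall>X\<in>S_of h. X \<noteq> {}"
    using \<open>S_of h \<subseteq> K\<close> by blast
  have "0 \<le> \<zeta> (card (S_of h))"
    using zeta_nonneg by blast
  then have update_cost: "t \<le> 4 * \<zeta> (card (S_of h))"
    if "run K \<zeta> (disqs_update (u \<in> S_of h) u) (S_of h, M) out \<sigma>' t" for u out \<sigma>' t
    using run_disqs_update[OF that] by simp
  show "(\<forall>u\<in>K. terminates K (disqs_update (u \<in> S_of h) u) \<sigma> \<and>
          (\<forall>out \<sigma>' t. run K \<zeta> (disqs_update (u \<in> S_of h) u) \<sigma> out \<sigma>' t
             \<longrightarrow> t \<le> 4 * \<zeta> (card (S_of h)))) \<and>
        terminates K disqs_query \<sigma> \<and>
        (\<forall>out \<sigma>' t. run K \<zeta> disqs_query \<sigma> out \<sigma>' t \<longrightarrow>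
           set out \<subseteq> S_of h \<and> distinct out \<and> independent (set out) \<and>
           (1 / real f) * real (OPT (S_of h)) \<le> real (length out) \<and>
           t \<le> 4 * real (max 1 (length out)) * \<zeta> (card (S_of h)))"
    unfolding \<sigma>
    using terminates_disqs_update[of _ K "S_of h" M] update_cost
      terminates_disqs_query[OF finite_S_of \<open>S_of h \<subseteq> K\<close> \<open>\<forall>X\<in>S_of h. X \<noteq> {}\<close>, of M]
      disqs_query_correct[where \<zeta> = \<zeta> and M = M, OF fat objects' finite_S_of \<open>S_of h \<subseteq> K\<close>
        \<open>0 \<le> \<zeta> (card (S_of h))\<close>]
    by simp
qed

end
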